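(* Let $\mathcal F_n$ be a class of real-valued functions of $v$, and let $\{q_{k,n,\jmath}\}$, $1\le \jmath\le \mathcal J$, $1\le k\le k_{n,\jmath}$, be functions satisfying $\sup_{1\le k\le k_{n,\jmath}}\sup_{P\in\mathbf P}\|q_{k,n,\jmath}\|_{L^\infty_P}\le B_n$ for all $1\le\jmath\le\mathcal J$, with $B_n\ge 1$. Define $$\mathcal G_n\equiv\{f(x)q_{k,n,\jmath}(z_\jmath): f\in\mathcal F_n,\ 1\le\jmath\le\mathcal J,\ 1\le k\le k_{n,\jmath}\}.$$ Then for all $\epsilon>0$ and all $P\in\mathbf P$, $$N_{[\,]}(\epsilon,\mathcal G_n,\|\cdot\|_{L^2_P})\le k_n\times N_{[\,]}(\epsilon/B_n,\mathcal F_n,\|\cdot\|_{L^2_P}).$$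
   Context: Observations are $V=(X,Z)$ with $X\in\mathbf R^{d_x}$ and $Z=(Z_1,\dots,Z_{\mathcal J})$, $Z_\jmath\in\mathbf R^{d_{z_\jmath}}$; $\mathbf P$ is a family of distributions of $V$. $k_n\equiv\sum_{\jmath=1}^{\mathcal J}k_{n,\jmath}$. For $q\ge1$, $\|f\|_{L^q_P}^q=E_P|f(V)|^q$. An $\epsilon$-bracket under $\|\cdot\|_{L^2_P}$ is a set $\{f: L\le f\le U\}$ with $\|U-L\|_{L^2_P}<\epsilon$; $N_{[\,]}(\epsilon,\mathcal G,\|\cdot\|_{L^2_P})$ is the smallest number of $\epsilon$-brackets needed to cover $\mathcal G$. *)

theory Defs
  imports "HOL-Probability.Probability"
begin

definition L2_norm :: "'v measure \<Rightarrow> ('v \<Rightarrow> real) \<Rightarrow> real" where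
  "L2_norm P g = sqrt (\<integral>v. (g v)\<^sup>2 \<partial>P)"

definition is_bracket :: "'v measure \<Rightarrow> real \<Rightarrow> ('v \<Rightarrow> real) \<Rightarrow> ('v \<Rightarrow> real) \<Rightarrow> bool" where
  "is_bracket P eps L U \<longleftrightarrow>
     L \<in> borel_measurable P \<and> U \<in> borel_measurable P \<and>
     integrable P (\<lambda>v. (U v - L v)\<^sup>2) \<and> L2_norm P (\<lambda>v. U v - L v) < eps"

definition in_bracket :: "'v measure \<Rightarrow> ('v \<Rightarrow> real) \<Rightarrow> ('v \<Rightarrow> real) \<Rightarrow> ('v \<Rightarrow> real) \<Rightarrow> bool" where
  "in_bracket P L U f \<longleftrightarrow> (\<forall>v\<in>space P. L v \<le> f v \<and> f v \<le> U v)"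

definition bracketing_number :: "real \<Rightarrow> ('v \<Rightarrow> real) set \<Rightarrow> 'v measure \<Rightarrow> enat" where
  "bracketing_number eps G P =
     (INF m \<in> {m. \<exists>Ls Us :: nat \<Rightarrow> 'v \<Rightarrow> real.
                  (\<forall>i<m. is_bracket P eps (Ls i) (Us i)) \<and>
                  (\<forall>g\<in>G. \<exists>i<m. in_bracket P (Ls i) (Us i) g)}. enat m)"

end

theory Submission
  imports Defs
begin

text \<open>Write \<open>q = q\<^sup>+ - q\<^sup>-\<close>. If \<open>L \<le> f \<le> U\<close>, then \<open>f q\<close> lies between
  \<open>L q\<^sup>+ - U q\<^sup>-\<close> and \<open>U q\<^sup>+ - L q\<^sup>-\<close>, a bracket whose width is \<open>(U - L) \<bar>q\<bar>\<close>; so a bound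
  \<open>\<bar>q\<bar> \<le> B\<close> turns an \<open>\<epsilon>/B\<close>-bracket of \<open>f\<close> into an \<open>\<epsilon>\<close>-bracket of \<open>f q\<close>. Covering
  \<open>F\<close> by \<open>N\<close> brackets and multiplying each by each of the \<open>k\<^sub>n\<close> functions \<open>q\<^sub>k\<^sub>,\<^sub>n\<^sub>,\<^sub>\<jmath>\<close>
  yields \<open>k\<^sub>n N\<close> brackets covering \<open>\<G>\<^sub>n\<close>.\<close>

definition bracket_lower_mult :: "('v \<Rightarrow> real) \<Rightarrow> ('v \<Rightarrow> real) \<Rightarrow> ('v \<Rightarrow> real) \<Rightarrow> 'v \<Rightarrow> real" where
  "bracket_lower_mult L U q v = L v * max (q v) 0 - U v * max (- q v) 0"

definition bracket_upper_mult :: "('v \<Rightarrow> real) \<Rightarrow> ('v \<Rightarrow> real) \<Rightarrow> ('v \<Rightarrow> real) \<Rightarrow> 'v \<Rightarrow> real" where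
  "bracket_upper_mult L U q v = U v * max (q v) 0 - L v * max (- q v) 0"

lemma bracket_upper_mult_minus_lower:
  "bracket_upper_mult L U q v - bracket_lower_mult L U q v = (U v - L v) * \<bar>q v\<bar>"
  by (simp add: bracket_lower_mult_def bracket_upper_mult_def max_def algebra_simps abs_if)

lemma in_bracket_mult:
  assumes "in_bracket P L U f"
  shows "in_bracket P (bracket_lower_mult L U q) (bracket_upper_mult L U q) (\<lambda>v. f v * q v)"
  unfolding in_bracket_def
proof
  fix v assume "v \<in> space P"
  then have "L v \<le> f v" "f v \<le> U v" using assms unfolding in_bracket_def by auto
  then show "bracket_lower_mult L U q v \<le> f v * q v \<and> f v * q v \<le> bracket_upper_mult L U q v"
    unfolding bracket_lower_mult_def bracket_upper_mult_def
    by (cases "q v \<ge> 0") (simp_all add: max_def mult_right_mono mult_right_mono_neg)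
qed

lemma L2_norm_mult_bounded_le:
  assumes g: "g \<in> borel_measurable P" "integrable P (\<lambda>v. (g v)\<^sup>2)"
    and q: "q \<in> borel_measurable P" "AE v in P. \<bar>q v\<bar> \<le> B"
  shows "integrable P (\<lambda>v. (g v * q v)\<^sup>2)"
    and "L2_norm P (\<lambda>v. g v * q v) \<le> \<bar>B\<bar> * L2_norm P g"
proof -
  have ptw: "AE v in P. (g v * q v)\<^sup>2 \<le> B\<^sup>2 * (g v)\<^sup>2"
    using q(2)
  proof (rule AE_mp, intro AE_I2 impI)
    fix v assume "\<bar>q v\<bar> \<le> B"
    then have "(q v)\<^sup>2 \<le> B\<^sup>2" by (metis abs_ge_zero power2_abs power_mono)
    then have "(g v)\<^sup>2 * (q v)\<^sup>2 \<le> (g v)\<^sup>2 * B\<^sup>2" by (rule mult_left_mono) simp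
    then show "(g v * q v)\<^sup>2 \<le> B\<^sup>2 * (g v)\<^sup>2"
      by (simp add: power_mult_distrib mult.commute)
  qed
  have bound: "integrable P (\<lambda>v. B\<^sup>2 * (g v)\<^sup>2)" using g(2) by simp
  show int: "integrable P (\<lambda>v. (g v * q v)\<^sup>2)"
    by (rule Bochner_Integration.integrable_bound[OF bound])
      (use g(1) q(1) ptw in \<open>auto elim: AE_mp\<close>)
  have "L2_norm P (\<lambda>v. g v * q v) \<le> sqrt (\<integral>v. B\<^sup>2 * (g v)\<^sup>2 \<partial>P)"
    unfolding L2_norm_def by (intro real_sqrt_le_mono integral_mono_AE[OF int bound ptw])
  also have "\<dots> = \<bar>B\<bar> * L2_norm P g"
    by (simp add: L2_norm_def real_sqrt_mult)
  finally show "L2_norm P (\<lambda>v. g v * q v) \<le> \<bar>B\<bar> * L2_norm P g" .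
qed

lemma is_bracket_mult:
  assumes br: "is_bracket P e L U" and q: "q \<in> borel_measurable P" "AE v in P. \<bar>q v\<bar> \<le> B"
    and B: "B > 0"
  shows "is_bracket P (e * B) (bracket_lower_mult L U q) (bracket_upper_mult L U q)"
proof -
  have meas: "L \<in> borel_measurable P" "U \<in> borel_measurable P"
    and "integrable P (\<lambda>v. (U v - L v)\<^sup>2)" and width: "L2_norm P (\<lambda>v. U v - L v) < e"
    using br unfolding is_bracket_def by auto
  moreover have "(\<lambda>v. U v - L v) \<in> borel_measurable P" using meas by measurable
  moreover have "(\<lambda>v. \<bar>q v\<bar>) \<in> borel_measurable P" "AE v in P. \<bar>\<bar>q v\<bar>\<bar> \<le> B"
    using q by auto
  ultimately have int: "integrable P (\<lambda>v. ((U v - L v) * \<bar>q v\<bar>)\<^sup>2)"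
    and norm: "L2_norm P (\<lambda>v. (U v - L v) * \<bar>q v\<bar>) \<le> B * L2_norm P (\<lambda>v. U v - L v)"
    using L2_norm_mult_bounded_le[of "\<lambda>v. U v - L v" P "\<lambda>v. \<bar>q v\<bar>" B] B by auto
  note norm
  also have "\<dots> < e * B" using width B by (simp add: mult.commute)
  finally have "L2_norm P (\<lambda>v. (U v - L v) * \<bar>q v\<bar>) < e * B" .
  moreover have "bracket_lower_mult L U q \<in> borel_measurable P"
    "bracket_upper_mult L U q \<in> borel_measurable P"
    unfolding bracket_lower_mult_def bracket_upper_mult_def using meas q by measurable
  ultimately show ?thesis
    using int unfolding is_bracket_def bracket_upper_mult_minus_lower by blast
qed

lemma bracketing_number_le:
  assumes "\<forall>i<m. is_bracket P eps (Ls i) (Us i)" "\<forall>g\<in>G. \<exists>i<m. in_bracket P (Ls i) (Us i) g"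
  shows "bracketing_number eps G P \<le> enat m"
  unfolding bracketing_number_def using assms by (intro INF_lower) blast

lemma bracketing_number_attained:
  assumes "bracketing_number eps G P = enat m"
  obtains Ls Us where "\<forall>i<m. is_bracket P eps (Ls i) (Us i)"
    "\<forall>g\<in>G. \<exists>i<m. in_bracket P (Ls i) (Us i) g"
proof -
  define S where "S = {m. \<exists>Ls Us :: nat \<Rightarrow> 'a \<Rightarrow> real. (\<forall>i<m. is_bracket P eps (Ls i) (Us i)) \<and>
                     (\<forall>g\<in>G. \<exists>i<m. in_bracket P (Ls i) (Us i) g)}"
  have inf: "Inf (enat ` S) = enat m"
    using assms unfolding bracketing_number_def S_def by simp
  then have "enat ` S \<noteq> {}" by (auto simp: Inf_enat_def)
  then have "Inf (enat ` S) \<in> enat ` S" unfolding Inf_enat_def by (auto intro: LeastI)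
  then have "m \<in> S" using inf by auto
  then show ?thesis using that unfolding S_def by blast
qed

lemma bracket_cover_mult:
  assumes I: "finite I"
    and q_meas: "\<And>p. p \<in> I \<Longrightarrow> q p \<in> borel_measurable P"
    and q_bound: "\<And>p. p \<in> I \<Longrightarrow> AE v in P. \<bar>q p v\<bar> \<le> B" and B: "B > 0"
    and br: "\<forall>i<m. is_bracket P (eps / B) (Ls i) (Us i)"
    and cov: "\<forall>f\<in>F. \<exists>i<m. in_bracket P (Ls i) (Us i) f"
  obtains Ls' Us' where "\<forall>n<card I * m. is_bracket P eps (Ls' n) (Us' n)"
    "\<forall>g\<in>{(\<lambda>v. f v * q p v) | f p. f \<in> F \<and> p \<in> I}. \<exists>n<card I * m. in_bracket P (Ls' n) (Us' n) g"
proof -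
  obtain h where h: "bij_betw h {0..<card I} I" using ex_bij_betw_nat_finite[OF I] by blast
  \<comment> \<open>bracket \<open>n = a m + i\<close> is the \<open>i\<close>-th bracket of \<open>F\<close> multiplied by \<open>q (h a)\<close>\<close>
  define Ls' where "Ls' n = bracket_lower_mult (Ls (n mod m)) (Us (n mod m)) (q (h (n div m)))" for n
  define Us' where "Us' n = bracket_upper_mult (Ls (n mod m)) (Us (n mod m)) (q (h (n div m)))" for n
  have "is_bracket P eps (Ls' n) (Us' n)" if n: "n < card I * m" for n
  proof -
    have m: "m > 0" using n by (cases m) auto
    then have "n div m < card I" using n by (simp add: div_less_iff_less_mult)
    then have "h (n div m) \<in> I" using h by (auto simp: bij_betw_def)
    then have "is_bracket P (eps / B * B) (Ls' n) (Us' n)"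
      unfolding Ls'_def Us'_def using m br q_meas q_bound B by (intro is_bracket_mult) auto
    then show ?thesis using B by simp
  qed
  moreover have "\<exists>n<card I * m. in_bracket P (Ls' n) (Us' n) (\<lambda>v. f v * q p v)"
    if "f \<in> F" "p \<in> I" for f p
  proof -
    obtain i where i: "i < m" "in_bracket P (Ls i) (Us i) f" using cov \<open>f \<in> F\<close> by blast
    obtain a where a: "a < card I" "h a = p" using h \<open>p \<in> I\<close>
      by (metis atLeastLessThan_iff bij_betw_def imageE)
    have "a * m + i < (a + 1) * m" using i(1) by simp
    also have "\<dots> \<le> card I * m" using a(1) by (intro mult_right_mono) auto
    finally have "a * m + i < card I * m" .
    moreover have "in_bracket P (Ls' (a * m + i)) (Us' (a * m + i)) (\<lambda>v. f v * q p v)"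
      unfolding Ls'_def Us'_def using i a(2) in_bracket_mult[OF i(2)] by simp
    ultimately show ?thesis by blast
  qed
  ultimately show ?thesis using that by blast
qed

lemma bracketing_number_mult_le:
  assumes I: "finite I"
    and q_meas: "\<And>p. p \<in> I \<Longrightarrow> q p \<in> borel_measurable P"
    and q_bound: "\<And>p. p \<in> I \<Longrightarrow> AE v in P. \<bar>q p v\<bar> \<le> B" and B: "B > 0"
  shows "bracketing_number eps {(\<lambda>v. f v * q p v) | f p. f \<in> F \<and> p \<in> I} P
           \<le> enat (card I) * bracketing_number (eps / B) F P"
    (is "bracketing_number eps ?G P \<le> _")
proof (cases "bracketing_number (eps / B) F P")
  case (enat m)
  obtain Ls Us where br: "\<forall>i<m. is_bracket P (eps / B) (Ls i) (Us i)"
      and cov: "\<forall>f\<in>F. \<exists>i<m. in_bracket P (Ls i) (Us i) f"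
    using enat by (rule bracketing_number_attained)
  obtain Ls' Us' where "\<forall>n<card I * m. is_bracket P eps (Ls' n) (Us' n)"
      "\<forall>g\<in>?G. \<exists>n<card I * m. in_bracket P (Ls' n) (Us' n) g"
    by (rule bracket_cover_mult[OF I q_meas q_bound B br cov])
  then have "bracketing_number eps ?G P \<le> enat (card I * m)"
    by (rule bracketing_number_le)
  then show ?thesis using enat by simp
next
  case infinity
  show ?thesis
  proof (cases "I = {}")
    case True
    then have "?G = {}" by simp
    then have "bracketing_number eps ?G P \<le> enat 0"
      by (intro bracketing_number_le) auto
    then show ?thesis using True by (simp add: enat_0)
  next
    case False
    then show ?thesis using I infinity by (simp add: imult_is_infinity zero_enat_def)
  qed
qed

theorem lemmaB1:
  fixes PP :: "'v measure set"
    and F :: "('v \<Rightarrow> real) set"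
    and zc :: "nat \<Rightarrow> 'v \<Rightarrow> 'z"
    and q :: "nat \<Rightarrow> nat \<Rightarrow> 'z \<Rightarrow> real"
    and J :: nat and kn :: "nat \<Rightarrow> nat" and B :: real
  assumes prob: "\<And>P. P \<in> PP \<Longrightarrow> prob_space P"
    and B_ge: "B \<ge> 1"
    and q_meas: "\<And>P j k. P \<in> PP \<Longrightarrow> 1 \<le> j \<Longrightarrow> j \<le> J \<Longrightarrow> 1 \<le> k \<Longrightarrow> k \<le> kn j \<Longrightarrow>
                   (\<lambda>v. q j k (zc j v)) \<in> borel_measurable P"
    and q_bound: "\<And>P j k. P \<in> PP \<Longrightarrow> 1 \<le> j \<Longrightarrow> j \<le> J \<Longrightarrow> 1 \<le> k \<Longrightarrow> k \<le> kn j \<Longrightarrow>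
                   (AE v in P. \<bar>q j k (zc j v)\<bar> \<le> B)"
    and eps: "eps > 0"
    and P: "P \<in> PP"
  shows "bracketing_number eps
           {(\<lambda>v. f v * q j k (zc j v)) | f j k. f \<in> F \<and> 1 \<le> j \<and> j \<le> J \<and> 1 \<le> k \<and> k \<le> kn j} P
         \<le> enat (\<Sum>j=1..J. kn j) * bracketing_number (eps / B) F P"
proof -
  define I where "I = (SIGMA j:{1..J}. {1..kn j})"
  define qI where "qI p v = q (fst p) (snd p) (zc (fst p) v)" for p v
  have "{(\<lambda>v. f v * q j k (zc j v)) | f j k. f \<in> F \<and> 1 \<le> j \<and> j \<le> J \<and> 1 \<le> k \<and> k \<le> kn j}
      = {(\<lambda>v. f v * qI p v) | f p. f \<in> F \<and> p \<in> I}"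
    unfolding I_def qI_def by force
  moreover have "card I = (\<Sum>j=1..J. kn j)" unfolding I_def by simp
  moreover have "bracketing_number eps {(\<lambda>v. f v * qI p v) | f p. f \<in> F \<and> p \<in> I} P
      \<le> enat (card I) * bracketing_number (eps / B) F P"
    using q_meas[OF P] q_bound[OF P] B_ge
    by (intro bracketing_number_mult_le) (auto simp: I_def qI_def)
  ultimately show ?thesis by simp
qed

end
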